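(* Let $(\Omega,\mathcal F,\mathbb P)$ be a probability space with an invertible, measurable, $\mathbb P$-preserving ergodic $\sigma$; let $M$ be a compact Riemannian manifold with normalized volume $m$, $I\subset(-1,1)$ an open interval containing $0$, and for $\omega\in\Omega$, $\epsilon\in I$ let $\mathcal L_{\omega,\epsilon}$ be the transfer operator (with respect to $m$) of a map $T_{\omega,\epsilon}\colon M\to M$, with $\mathcal L^n_{\omega,\epsilon}:=\mathcal L_{\sigma^{n-1}\omega,\epsilon}\circ\cdots\circ\mathcal L_{\omega,\epsilon}$. Assume there is a random variable $E(\omega)$ with $\|\mathcal L_{\omega,\epsilon}\mathbf 1\|_\infty\le E(\omega)$ for all $\epsilon\in I$ and $\mathbb P$-a.e. $\omega$. Assume also there are functions $h_{\omega,\epsilon}$, a number $\beta>1$ and $C_1\in L^{p_1}(\Omega,\mathcal F,\mathbb P)$ with $p_1\ge1$ such that for $\mathbb P$-a.e. $\omega$, all $n\ge1$, $\epsilon\in I$ and $h\in C^1(M)$, $$\|\mathcal L^n_{\omega,\epsilon}h-m(h)h_{\sigma^n\omega,\epsilon}\|_\infty\le C_1(\omega)n^{-\beta}\|h\|_{C^1}.$$ Then there exists $B_0\in L^{p_1}(\Omega,\mathcal F,\mathbb P)$ such that for $\mathbb P$-a.e. $\omega$, all $n\ge1$ and $\epsilon\in I$, $\|\mathcal L^n_{\sigma^{-n}\omega,\epsilon}\mathbf 1\|_\infty\le B_0(\omega)+E(\sigma^{-1}\omega)$.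
   Context: $m(h)=\int_M h\,dm$; $\mathbf 1$ is the constant function $1$. *)

theory Defs
  imports "HOL-Probability.Probability"
begin

text \<open>Essential supremum norm with respect to a measure (value in ereal;
  equal to infinity for non-measurable functions).\<close>
definition supnorm :: "'m measure \<Rightarrow> ('m \<Rightarrow> real) \<Rightarrow> ereal" where
  "supnorm m f = esssup m (\<lambda>x. ereal \<bar>f x\<bar>)"

definition is_transfer_operator ::
  "'m measure \<Rightarrow> ('m \<Rightarrow> 'm) \<Rightarrow> (('m \<Rightarrow> real) \<Rightarrow> ('m \<Rightarrow> real)) \<Rightarrow> bool" where
  "is_transfer_operator m T L \<longleftrightarrow>
     T \<in> m \<rightarrow>\<^sub>M m \<and>
     (\<forall>f g. integrable m f \<longrightarrow> g \<in> borel_measurable m \<longrightarrow> bounded (range g) \<longrightarrow>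
        integrable m (L f) \<and>
        (\<integral>x. L f x * g x \<partial>m) = (\<integral>x. f x * g (T x) \<partial>m))"

fun lcomp :: "('o \<Rightarrow> 'e \<Rightarrow> ('m \<Rightarrow> real) \<Rightarrow> ('m \<Rightarrow> real)) \<Rightarrow> ('o \<Rightarrow> 'o) \<Rightarrow> nat \<Rightarrow> 'o \<Rightarrow> 'e
      \<Rightarrow> ('m \<Rightarrow> real) \<Rightarrow> ('m \<Rightarrow> real)" where
  "lcomp L \<sigma> 0 \<omega> \<epsilon> = id"
| "lcomp L \<sigma> (Suc n) \<omega> \<epsilon> = L ((\<sigma> ^^ n) \<omega>) \<epsilon> \<circ> lcomp L \<sigma> n \<omega> \<epsilon>"

definition measure_preserving_map :: "'o measure \<Rightarrow> ('o \<Rightarrow> 'o) \<Rightarrow> bool" where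
  "measure_preserving_map P \<sigma> \<longleftrightarrow> \<sigma> \<in> P \<rightarrow>\<^sub>M P \<and>
     (\<forall>A \<in> sets P. emeasure P (\<sigma> -` A \<inter> space P) = emeasure P A)"

definition ergodic_map :: "'o measure \<Rightarrow> ('o \<Rightarrow> 'o) \<Rightarrow> bool" where
  "ergodic_map P \<sigma> \<longleftrightarrow> (\<forall>A \<in> sets P. \<sigma> -` A \<inter> space P = A \<longrightarrow>
       emeasure P A = 0 \<or> emeasure P A = emeasure P (space P))"

definition in_Lp :: "'o measure \<Rightarrow> real \<Rightarrow> ('o \<Rightarrow> real) \<Rightarrow> bool" where
  "in_Lp P p f \<longleftrightarrow> f \<in> borel_measurable P \<and> integrable P (\<lambda>x. \<bar>f x\<bar> powr p)"

end

theory Submission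
  imports Defs
begin

text \<open>Fix \<open>\<omega>\<close> and \<open>n \<ge> 1\<close> and put \<open>\<omega>' = \<sigma>\<^sup>-\<^sup>n \<omega>\<close>, so that \<open>\<sigma>\<^sup>n \<omega>' = \<omega>\<close>. The decay
  hypothesis with \<open>h = 1\<close>, applied at \<open>\<omega>'\<close> for time \<open>n\<close> and at \<open>\<sigma>\<^sup>-\<^sup>1 \<omega>\<close> for time \<open>1\<close>,
  compares both \<open>L\<^sup>n(\<omega>') 1\<close> and \<open>L(\<sigma>\<^sup>-\<^sup>1 \<omega>) 1\<close> with the same function \<open>h(\<omega>)\<close>, and
  \<open>\<parallel>L(\<sigma>\<^sup>-\<^sup>1 \<omega>) 1\<parallel> \<le> E(\<sigma>\<^sup>-\<^sup>1 \<omega>)\<close>. By the triangle inequality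
  \<open>\<parallel>L\<^sup>n(\<omega>') 1\<parallel> \<le> 2 \<parallel>1\<parallel>\<^sub>C\<^sub>1 M(\<omega>) + E(\<sigma>\<^sup>-\<^sup>1 \<omega>)\<close> for any \<open>M(\<omega>) \<ge> sup\<^sub>k \<bar>C\<^sub>1(\<sigma>\<^sup>-\<^sup>k \<omega>)\<bar> k\<^sup>-\<^sup>\<beta>\<close>.
  Take for \<open>M\<close> the \<open>\<ell>\<^sup>p\<close>-norm \<open>(\<Sum>\<^sub>k (\<bar>C\<^sub>1(\<sigma>\<^sup>-\<^sup>k \<omega>)\<bar> k\<^sup>-\<^sup>\<beta>)\<^sup>p)\<^sup>1\<^sup>/\<^sup>p\<close> of this sequence: as \<open>\<sigma>\<^sup>-\<^sup>1\<close>
  preserves \<open>P\<close>, \<open>\<integral> M\<^sup>p dP = \<parallel>C\<^sub>1\<parallel>\<^sub>p\<^sup>p \<Sum>\<^sub>k k\<^sup>-\<^sup>\<beta>\<^sup>p\<close>, which is finite since \<open>\<beta> p > 1\<close>.\<close>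

lemma distr_left_inverse_measure_preserving:
  assumes "measure_preserving_map P \<sigma>" and "\<sigma>i \<in> P \<rightarrow>\<^sub>M P"
    and "\<And>x. x \<in> space P \<Longrightarrow> \<sigma>i (\<sigma> x) = x"
  shows "distr P P \<sigma>i = P"
proof (rule measure_eqI)
  show "sets (distr P P \<sigma>i) = sets P" by simp
  fix A assume "A \<in> sets (distr P P \<sigma>i)"
  then have A: "A \<in> sets P" by simp
  have \<sigma>: "\<sigma> \<in> P \<rightarrow>\<^sub>M P" using assms(1) unfolding measure_preserving_map_def by blast
  have preimage: "\<sigma>i -` A \<inter> space P \<in> sets P" using assms(2) A by (rule measurable_sets)
  have "\<sigma> -` (\<sigma>i -` A \<inter> space P) \<inter> space P = A"
    using assms(3) sets.sets_into_space[OF A] measurable_space[OF \<sigma>] by auto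
  then show "emeasure (distr P P \<sigma>i) A = emeasure P A"
    using assms(1,2) A preimage unfolding measure_preserving_map_def
    by (metis emeasure_distr)
qed

lemma distr_funpow_eq:
  assumes "f \<in> P \<rightarrow>\<^sub>M P" and "distr P P f = P"
  shows "distr P P (f ^^ n) = P"
proof (induction n)
  case 0
  then show ?case by (simp add: distr_id2)
next
  case (Suc n)
  have "distr P P (f ^^ Suc n) = distr (distr P P (f ^^ n)) P f"
    unfolding funpow.simps(2) using assms(1) by (simp add: distr_distr measurable_compose_n)
  also have "\<dots> = P" using Suc assms(2) by simp
  finally show ?case .
qed

lemma AE_funpow:
  assumes "f \<in> P \<rightarrow>\<^sub>M P" and "distr P P f = P" and "AE x in P. Q x"
  shows "AE x in P. \<forall>n. Q ((f ^^ n) x)"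
  unfolding AE_all_countable
  using assms AE_distrD[OF measurable_compose_n] distr_funpow_eq by metis

lemma funpow_left_inverse:
  assumes "\<And>x. x \<in> space P \<Longrightarrow> g (f x) = x" and "f \<in> P \<rightarrow>\<^sub>M P" and "x \<in> space P"
  shows "(g ^^ n) ((f ^^ n) x) = x"
proof (induction n)
  case (Suc n)
  have "(f ^^ n) x \<in> space P"
    using measurable_space[OF measurable_compose_n[OF assms(2)] assms(3)] .
  then have "(g ^^ n) (g (f ((f ^^ n) x))) = x"
    using Suc assms(1) by simp
  then show ?case by (simp add: funpow_swap1)
qed simp

lemma integrable_lcomp:
  assumes TO: "\<And>\<omega>'. \<omega>' \<in> \<Omega> \<Longrightarrow> is_transfer_operator m (T \<omega>') (L \<omega>' \<epsilon>)"
    and invariant: "\<And>\<omega>'. \<omega>' \<in> \<Omega> \<Longrightarrow> \<sigma> \<omega>' \<in> \<Omega>"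
    and "\<omega> \<in> \<Omega>" and "integrable m h"
  shows "integrable m (lcomp L \<sigma> n \<omega> \<epsilon> h)"
proof (induction n)
  case (Suc n)
  have "(\<sigma> ^^ n) \<omega> \<in> \<Omega>" using invariant \<open>\<omega> \<in> \<Omega>\<close> by (induction n) auto
  moreover have "bounded (range (\<lambda>_::'m. 1::real))" by simp
  ultimately have "integrable m (L ((\<sigma> ^^ n) \<omega>) \<epsilon> (lcomp L \<sigma> n \<omega> \<epsilon> h))"
    using TO Suc unfolding is_transfer_operator_def by (meson borel_measurable_const)
  then show ?case by simp
qed (simp add: \<open>integrable m h\<close>)

lemma supnorm_leD:
  assumes "supnorm m g \<le> ereal r"
  shows "AE x in m. \<bar>g x\<bar> \<le> r"
  using esssup_AE[of "\<lambda>x. ereal \<bar>g x\<bar>" m]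
proof eventually_elim
  case (elim x)
  then show ?case using assms unfolding supnorm_def by (metis ereal_less_eq(3) order_trans)
qed

lemma supnorm_le_triangle:
  assumes "g \<in> borel_measurable m"
    and "supnorm m (\<lambda>x. g x - h x) \<le> ereal r"
    and "supnorm m (\<lambda>x. k x - h x) \<le> ereal s"
    and "supnorm m k \<le> ereal t"
  shows "supnorm m g \<le> ereal (r + s + t)"
  unfolding supnorm_def
proof (rule esssup_I)
  show "(\<lambda>x. ereal \<bar>g x\<bar>) \<in> borel_measurable m" using assms(1) by measurable
  show "AE x in m. ereal \<bar>g x\<bar> \<le> ereal (r + s + t)"
    using supnorm_leD[OF assms(2)] supnorm_leD[OF assms(3)] supnorm_leD[OF assms(4)]
    by eventually_elim auto
qed

lemma in_Lp_cmult:
  assumes "in_Lp P p g"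
  shows "in_Lp P p (\<lambda>x. c * g x)"
  using assms unfolding in_Lp_def by (auto simp: abs_mult powr_mult)

definition orbit_power_sum :: "('o \<Rightarrow> 'o) \<Rightarrow> ('o \<Rightarrow> real) \<Rightarrow> real \<Rightarrow> real \<Rightarrow> 'o \<Rightarrow> ennreal" where
  "orbit_power_sum f C \<beta> p \<omega> = (\<Sum>n. ennreal ((\<bar>C ((f ^^ n) \<omega>)\<bar> * real n powr (-\<beta>)) powr p))"

text \<open>Since \<open>enn2real \<infinity> = 0\<close>, the majorant is meaningful only where the sum is finite,
  which is almost everywhere.\<close>
definition orbit_majorant :: "('o \<Rightarrow> 'o) \<Rightarrow> ('o \<Rightarrow> real) \<Rightarrow> real \<Rightarrow> real \<Rightarrow> 'o \<Rightarrow> real" where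
  "orbit_majorant f C \<beta> p \<omega> = enn2real (orbit_power_sum f C \<beta> p \<omega>) powr (1 / p)"

lemma borel_measurable_orbit_power_sum:
  assumes "f \<in> P \<rightarrow>\<^sub>M P" and "C \<in> borel_measurable P"
  shows "orbit_power_sum f C \<beta> p \<in> borel_measurable P"
  unfolding orbit_power_sum_def using assms by measurable

lemma nn_integral_orbit_power_sum:
  assumes f: "f \<in> P \<rightarrow>\<^sub>M P" and preserving: "distr P P f = P"
    and C: "C \<in> borel_measurable P"
  shows "(\<integral>\<^sup>+\<omega>. orbit_power_sum f C \<beta> p \<omega> \<partial>P)
    = (\<Sum>n. ennreal (real n powr (-\<beta> * p))) * (\<integral>\<^sup>+\<omega>. ennreal (\<bar>C \<omega>\<bar> powr p) \<partial>P)"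
proof -
  have C_orbit: "(\<lambda>\<omega>. C ((f ^^ n) \<omega>)) \<in> borel_measurable P" for n
    using f C by measurable
  have orbit_term: "(\<integral>\<^sup>+\<omega>. ennreal ((\<bar>C ((f ^^ n) \<omega>)\<bar> * real n powr (-\<beta>)) powr p) \<partial>P)
      = ennreal (real n powr (-\<beta> * p)) * (\<integral>\<^sup>+\<omega>. ennreal (\<bar>C \<omega>\<bar> powr p) \<partial>P)" for n
  proof -
    have "(\<integral>\<^sup>+\<omega>. ennreal ((\<bar>C ((f ^^ n) \<omega>)\<bar> * real n powr (-\<beta>)) powr p) \<partial>P)
        = (\<integral>\<^sup>+\<omega>. ennreal (real n powr (-\<beta> * p)) * ennreal (\<bar>C ((f ^^ n) \<omega>)\<bar> powr p) \<partial>P)"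
      by (simp add: powr_mult powr_powr ennreal_mult' mult.commute)
    also have "\<dots> = ennreal (real n powr (-\<beta> * p)) * (\<integral>\<^sup>+\<omega>. ennreal (\<bar>C ((f ^^ n) \<omega>)\<bar> powr p) \<partial>P)"
      using C_orbit by (intro nn_integral_cmult) measurable
    also have "(\<integral>\<^sup>+\<omega>. ennreal (\<bar>C ((f ^^ n) \<omega>)\<bar> powr p) \<partial>P)
        = (\<integral>\<^sup>+\<omega>. ennreal (\<bar>C \<omega>\<bar> powr p) \<partial>distr P P (f ^^ n))"
      using f C by (simp add: nn_integral_distr measurable_compose_n)
    finally show ?thesis using distr_funpow_eq[OF f preserving] by simp
  qed
  have "(\<integral>\<^sup>+\<omega>. orbit_power_sum f C \<beta> p \<omega> \<partial>P)
      = (\<Sum>n. \<integral>\<^sup>+\<omega>. ennreal ((\<bar>C ((f ^^ n) \<omega>)\<bar> * real n powr (-\<beta>)) powr p) \<partial>P)"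
    unfolding orbit_power_sum_def using C_orbit by (intro nn_integral_suminf) measurable
  then show ?thesis by (simp add: orbit_term)
qed

lemma nn_integral_orbit_power_sum_finite:
  assumes "f \<in> P \<rightarrow>\<^sub>M P" and "distr P P f = P" and C: "in_Lp P p C" and "\<beta> * p > 1"
  shows "(\<integral>\<^sup>+\<omega>. orbit_power_sum f C \<beta> p \<omega> \<partial>P) \<noteq> \<infinity>"
proof -
  have "summable (\<lambda>n. real n powr (-\<beta> * p))"
    using \<open>\<beta> * p > 1\<close> by (simp add: summable_real_powr_iff)
  then have "(\<Sum>n. ennreal (real n powr (-\<beta> * p))) \<noteq> \<infinity>"
    by (subst suminf_ennreal2) auto
  moreover have "(\<integral>\<^sup>+\<omega>. ennreal (\<bar>C \<omega>\<bar> powr p) \<partial>P) \<noteq> \<infinity>"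
    using C unfolding in_Lp_def by (simp add: nn_integral_eq_integral)
  ultimately show ?thesis
    using C assms(1,2) unfolding in_Lp_def
    by (simp add: nn_integral_orbit_power_sum ennreal_mult_eq_top_iff)
qed

lemma AE_orbit_power_sum_finite:
  assumes "f \<in> P \<rightarrow>\<^sub>M P" and "distr P P f = P" and "in_Lp P p C" and "\<beta> * p > 1"
  shows "AE \<omega> in P. orbit_power_sum f C \<beta> p \<omega> \<noteq> \<infinity>"
  using assms nn_integral_orbit_power_sum_finite[OF assms]
  unfolding in_Lp_def by (intro nn_integral_PInf_AE borel_measurable_orbit_power_sum) auto

lemma in_Lp_orbit_majorant:
  assumes f: "f \<in> P \<rightarrow>\<^sub>M P" and "distr P P f = P" and C: "in_Lp P p C"
    and "p > 0" and "\<beta> * p > 1"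
  shows "in_Lp P p (orbit_majorant f C \<beta> p)"
  unfolding in_Lp_def
proof
  have S: "orbit_power_sum f C \<beta> p \<in> borel_measurable P"
    using f C unfolding in_Lp_def by (blast intro: borel_measurable_orbit_power_sum)
  then show "orbit_majorant f C \<beta> p \<in> borel_measurable P"
    unfolding orbit_majorant_def by measurable
  have "\<bar>orbit_majorant f C \<beta> p \<omega>\<bar> powr p = enn2real (orbit_power_sum f C \<beta> p \<omega>)" for \<omega>
    using \<open>p > 0\<close> by (simp add: orbit_majorant_def powr_powr)
  moreover have "integrable P (\<lambda>\<omega>. enn2real (orbit_power_sum f C \<beta> p \<omega>))"
  proof (rule integrableI_bounded)
    show "(\<lambda>\<omega>. enn2real (orbit_power_sum f C \<beta> p \<omega>)) \<in> borel_measurable P"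
      using S by measurable
    have "(\<integral>\<^sup>+\<omega>. ennreal (norm (enn2real (orbit_power_sum f C \<beta> p \<omega>))) \<partial>P)
        \<le> (\<integral>\<^sup>+\<omega>. orbit_power_sum f C \<beta> p \<omega> \<partial>P)"
      by (intro nn_integral_mono) (simp add: ennreal_enn2real_if)
    then show "(\<integral>\<^sup>+\<omega>. ennreal (norm (enn2real (orbit_power_sum f C \<beta> p \<omega>))) \<partial>P) < \<infinity>"
      using nn_integral_orbit_power_sum_finite[OF assms(1-3,5)] by (simp add: less_top order_le_less_trans)
  qed
  ultimately show "integrable P (\<lambda>\<omega>. \<bar>orbit_majorant f C \<beta> p \<omega>\<bar> powr p)" by simp
qed

lemma orbit_term_le_majorant:
  assumes "orbit_power_sum f C \<beta> p \<omega> \<noteq> \<infinity>" and "p > 0"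
  shows "\<bar>C ((f ^^ n) \<omega>)\<bar> * real n powr (-\<beta>) \<le> orbit_majorant f C \<beta> p \<omega>"
proof -
  define t where "t = \<bar>C ((f ^^ n) \<omega>)\<bar> * real n powr (-\<beta>)"
  have "ennreal (t powr p) \<le> orbit_power_sum f C \<beta> p \<omega>"
    unfolding orbit_power_sum_def t_def using ennreal_suminf_lessD not_le by blast
  then have "enn2real (ennreal (t powr p)) \<le> enn2real (orbit_power_sum f C \<beta> p \<omega>)"
    using assms(1) by (intro enn2real_mono) (simp_all add: less_top)
  then have "t powr p \<le> enn2real (orbit_power_sum f C \<beta> p \<omega>)"
    by simp
  then have "(t powr p) powr (1 / p) \<le> orbit_majorant f C \<beta> p \<omega>"
    unfolding orbit_majorant_def using \<open>p > 0\<close> by (intro powr_mono2) auto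
  then show ?thesis
    using \<open>p > 0\<close> by (simp add: t_def powr_powr)
qed

lemma supnorm_lcomp_pullback_le_via_limit:
  fixes \<sigma>i :: "'o \<Rightarrow> 'o"
  assumes measurable: "lcomp L \<sigma> n ((\<sigma>i ^^ n) \<omega>) \<epsilon> (\<lambda>_. 1) \<in> borel_measurable m"
    and decay: "\<And>k. k \<ge> 1 \<Longrightarrow> supnorm m (\<lambda>x. lcomp L \<sigma> k ((\<sigma>i ^^ k) \<omega>) \<epsilon> (\<lambda>_. 1) x - h x)
      \<le> ereal (C ((\<sigma>i ^^ k) \<omega>) * real k powr (-\<beta>) * K)"
    and E: "supnorm m (L (\<sigma>i \<omega>) \<epsilon> (\<lambda>_. 1)) \<le> ereal e"
    and majorant: "\<And>k. \<bar>C ((\<sigma>i ^^ k) \<omega>)\<bar> * real k powr (-\<beta>) \<le> M"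
    and "n \<ge> 1"
  shows "supnorm m (lcomp L \<sigma> n ((\<sigma>i ^^ n) \<omega>) \<epsilon> (\<lambda>_. 1)) \<le> ereal (2 * \<bar>K\<bar> * M + e)"
proof -
  have weighted: "C ((\<sigma>i ^^ k) \<omega>) * real k powr (-\<beta>) * K \<le> \<bar>K\<bar> * M" for k
  proof -
    have "C ((\<sigma>i ^^ k) \<omega>) * real k powr (-\<beta>) * K
        \<le> (\<bar>C ((\<sigma>i ^^ k) \<omega>)\<bar> * real k powr (-\<beta>)) * \<bar>K\<bar>"
      by (metis abs_ge_self abs_mult abs_of_nonneg powr_ge_zero)
    also have "\<dots> \<le> M * \<bar>K\<bar>" using majorant by (intro mult_right_mono) auto
    finally show ?thesis by (simp add: mult.commute)
  qed
  have "supnorm m (\<lambda>x. L (\<sigma>i \<omega>) \<epsilon> (\<lambda>_. 1) x - h x) \<le> ereal (C (\<sigma>i \<omega>) * K)"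
    using decay[of 1] by simp
  also have "\<dots> \<le> ereal (\<bar>K\<bar> * M)" using weighted[of 1] by simp
  finally have step_1: "supnorm m (\<lambda>x. L (\<sigma>i \<omega>) \<epsilon> (\<lambda>_. 1) x - h x) \<le> ereal (\<bar>K\<bar> * M)" .
  have step_n: "supnorm m (\<lambda>x. lcomp L \<sigma> n ((\<sigma>i ^^ n) \<omega>) \<epsilon> (\<lambda>_. 1) x - h x) \<le> ereal (\<bar>K\<bar> * M)"
    using decay[OF \<open>n \<ge> 1\<close>] weighted[of n] by (simp add: order_trans)
  have "supnorm m (lcomp L \<sigma> n ((\<sigma>i ^^ n) \<omega>) \<epsilon> (\<lambda>_. 1)) \<le> ereal (\<bar>K\<bar> * M + \<bar>K\<bar> * M + e)"
    by (rule supnorm_le_triangle[OF measurable step_n step_1 E])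
  also have "\<bar>K\<bar> * M + \<bar>K\<bar> * M + e = 2 * \<bar>K\<bar> * M + e" by simp
  finally show ?thesis .
qed

lemma supnorm_lcomp_pullback_le:
  fixes \<sigma> \<sigma>i :: "'o \<Rightarrow> 'o"
  assumes m: "prob_space m"
    and TO: "\<And>\<omega>' \<epsilon>. \<omega>' \<in> \<Omega> \<Longrightarrow> \<epsilon> \<in> I \<Longrightarrow> is_transfer_operator m (T \<omega>' \<epsilon>) (L \<omega>' \<epsilon>)"
    and invariant: "\<And>\<omega>'. \<omega>' \<in> \<Omega> \<Longrightarrow> \<sigma> \<omega>' \<in> \<Omega>"
    and orbit: "\<And>k. (\<sigma>i ^^ k) \<omega> \<in> \<Omega>"
    and inverse: "\<And>k. (\<sigma> ^^ k) ((\<sigma>i ^^ k) \<omega>) = \<omega>"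
    and one: "(\<lambda>_. 1) \<in> H"
    and decay: "\<forall>k. \<forall>n \<ge> 1. \<forall>\<epsilon> \<in> I. \<forall>h \<in> H.
      supnorm m (\<lambda>x. lcomp L \<sigma> n ((\<sigma>i ^^ k) \<omega>) \<epsilon> h x
        - (\<integral>y. h y \<partial>m) * hh ((\<sigma> ^^ n) ((\<sigma>i ^^ k) \<omega>)) \<epsilon> x)
      \<le> ereal (C ((\<sigma>i ^^ k) \<omega>) * real n powr (-\<beta>) * c1norm h)"
    and E: "\<forall>\<epsilon> \<in> I. supnorm m (L (\<sigma>i \<omega>) \<epsilon> (\<lambda>_. 1)) \<le> ereal e"
    and majorant: "\<And>k. \<bar>C ((\<sigma>i ^^ k) \<omega>)\<bar> * real k powr (-\<beta>) \<le> M"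
  shows "\<forall>n \<ge> 1. \<forall>\<epsilon> \<in> I. supnorm m (lcomp L \<sigma> n ((\<sigma>i ^^ n) \<omega>) \<epsilon> (\<lambda>_. 1))
    \<le> ereal (2 * \<bar>c1norm (\<lambda>_. 1)\<bar> * M + e)"
proof (intro allI impI ballI)
  fix n :: nat and \<epsilon> assume "n \<ge> 1" and "\<epsilon> \<in> I"
  have diagonal: "supnorm m (\<lambda>x. lcomp L \<sigma> k ((\<sigma>i ^^ k) \<omega>) \<epsilon> (\<lambda>_. 1) x - hh \<omega> \<epsilon> x)
      \<le> ereal (C ((\<sigma>i ^^ k) \<omega>) * real k powr (-\<beta>) * c1norm (\<lambda>_. 1))" if "k \<ge> 1" for k
  proof -
    have "supnorm m (\<lambda>x. lcomp L \<sigma> k ((\<sigma>i ^^ k) \<omega>) \<epsilon> (\<lambda>_. 1) x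
        - (\<integral>y. 1 \<partial>m) * hh ((\<sigma> ^^ k) ((\<sigma>i ^^ k) \<omega>)) \<epsilon> x)
      \<le> ereal (C ((\<sigma>i ^^ k) \<omega>) * real k powr (-\<beta>) * c1norm (\<lambda>_. 1))"
      using decay that \<open>\<epsilon> \<in> I\<close> one by blast
    then show ?thesis using inverse by (simp add: prob_space.prob_space[OF m])
  qed
  have "integrable m (lcomp L \<sigma> n ((\<sigma>i ^^ n) \<omega>) \<epsilon> (\<lambda>_. 1))"
    using TO \<open>\<epsilon> \<in> I\<close> invariant orbit m
    by (intro integrable_lcomp[where \<Omega> = \<Omega> and T = "\<lambda>\<omega>'. T \<omega>' \<epsilon>"])
      (auto intro: finite_measure.integrable_const prob_space.axioms(1))
  then show "supnorm m (lcomp L \<sigma> n ((\<sigma>i ^^ n) \<omega>) \<epsilon> (\<lambda>_. 1))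
      \<le> ereal (2 * \<bar>c1norm (\<lambda>_. 1)\<bar> * M + e)"
    using diagonal E \<open>\<epsilon> \<in> I\<close> majorant \<open>n \<ge> 1\<close>
    by (intro supnorm_lcomp_pullback_le_via_limit) (simp_all add: borel_measurable_integrable)
qed

theorem lemma22:
  fixes P :: "'o measure" and \<sigma> \<sigma>i :: "'o \<Rightarrow> 'o"
    and m :: "'m measure" and T :: "'o \<Rightarrow> real \<Rightarrow> 'm \<Rightarrow> 'm"
    and L :: "'o \<Rightarrow> real \<Rightarrow> ('m \<Rightarrow> real) \<Rightarrow> ('m \<Rightarrow> real)"
    and a b :: real
    and C1set :: "('m \<Rightarrow> real) set" and c1norm :: "('m \<Rightarrow> real) \<Rightarrow> real"
    and E C1 :: "'o \<Rightarrow> real" and hh :: "'o \<Rightarrow> real \<Rightarrow> 'm \<Rightarrow> real"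
    and \<beta> p1 :: real
  assumes P: "prob_space P"
    and inv1: "\<And>x. x \<in> space P \<Longrightarrow> \<sigma> (\<sigma>i x) = x"
    and inv2: "\<And>x. x \<in> space P \<Longrightarrow> \<sigma>i (\<sigma> x) = x"
    and \<sigma>i_meas: "\<sigma>i \<in> P \<rightarrow>\<^sub>M P"
    and mp: "measure_preserving_map P \<sigma>"
    and erg: "ergodic_map P \<sigma>"
    and m: "prob_space m"
    and I: "-1 \<le> a" "a < 0" "0 < b" "b \<le> 1"
    and TO: "\<And>\<omega> \<epsilon>. \<omega> \<in> space P \<Longrightarrow> \<epsilon> \<in> {a<..<b} \<Longrightarrow>
               is_transfer_operator m (T \<omega> \<epsilon>) (L \<omega> \<epsilon>)"
    and one_C1: "(\<lambda>_. 1) \<in> C1set"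
    and E: "E \<in> borel_measurable P"
    and E_bound: "AE \<omega> in P. \<forall>\<epsilon> \<in> {a<..<b}. supnorm m (L \<omega> \<epsilon> (\<lambda>_. 1)) \<le> ereal (E \<omega>)"
    and \<beta>: "\<beta> > 1"
    and p1: "p1 \<ge> 1"
    and C1: "in_Lp P p1 C1"
    and decay: "AE \<omega> in P. \<forall>n \<ge> 1. \<forall>\<epsilon> \<in> {a<..<b}. \<forall>h \<in> C1set.
       supnorm m (\<lambda>x. lcomp L \<sigma> n \<omega> \<epsilon> h x - (\<integral>y. h y \<partial>m) * hh ((\<sigma> ^^ n) \<omega>) \<epsilon> x)
         \<le> ereal (C1 \<omega> * real n powr (-\<beta>) * c1norm h)"
  shows "\<exists>B0. in_Lp P p1 B0 \<and>
    (AE \<omega> in P. \<forall>n \<ge> 1. \<forall>\<epsilon> \<in> {a<..<b}.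
       supnorm m (lcomp L \<sigma> n ((\<sigma>i ^^ n) \<omega>) \<epsilon> (\<lambda>_. 1)) \<le> ereal (B0 \<omega> + E (\<sigma>i \<omega>)))"
proof -
  have \<sigma>: "\<sigma> \<in> P \<rightarrow>\<^sub>M P" using mp unfolding measure_preserving_map_def by blast
  have \<sigma>i_preserving: "distr P P \<sigma>i = P"
    using mp \<sigma>i_meas inv2 by (rule distr_left_inverse_measure_preserving)
  have p1_pos: "p1 > 0" using p1 by simp
  have "\<beta> \<le> \<beta> * p1" using \<beta> p1 mult_left_mono[of 1 p1 \<beta>] by simp
  then have \<beta>p1: "\<beta> * p1 > 1" using \<beta> by linarith
  have E_pullback: "AE \<omega> in P. \<forall>\<epsilon> \<in> {a<..<b}. supnorm m (L (\<sigma>i \<omega>) \<epsilon> (\<lambda>_. 1)) \<le> ereal (E (\<sigma>i \<omega>))"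
    using AE_funpow[OF \<sigma>i_meas \<sigma>i_preserving E_bound] by eventually_elim (drule spec[of _ 1], simp)
  have "AE \<omega> in P. \<forall>n \<ge> 1. \<forall>\<epsilon> \<in> {a<..<b}. supnorm m (lcomp L \<sigma> n ((\<sigma>i ^^ n) \<omega>) \<epsilon> (\<lambda>_. 1))
      \<le> ereal (2 * \<bar>c1norm (\<lambda>_. 1)\<bar> * orbit_majorant \<sigma>i C1 \<beta> p1 \<omega> + E (\<sigma>i \<omega>))"
    using AE_orbit_power_sum_finite[OF \<sigma>i_meas \<sigma>i_preserving C1 \<beta>p1]
      AE_funpow[OF \<sigma>i_meas \<sigma>i_preserving decay] E_pullback AE_space
  proof eventually_elim
    case (elim \<omega>)
    have orbit: "(\<sigma>i ^^ k) \<omega> \<in> space P" for k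
      using measurable_space[OF measurable_compose_n[OF \<sigma>i_meas] elim(4)] .
    show ?case
      by (rule supnorm_lcomp_pullback_le[OF m TO measurable_space[OF \<sigma>] orbit
            funpow_left_inverse[OF inv1 \<sigma>i_meas elim(4)] one_C1 elim(2,3)
            orbit_term_le_majorant[OF elim(1) p1_pos]])
  qed
  then show ?thesis
    using in_Lp_cmult[OF in_Lp_orbit_majorant[OF \<sigma>i_meas \<sigma>i_preserving C1 p1_pos \<beta>p1]] by blast
qed

end
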